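(* Let $S$ be a rooted plane tree with $m\ge 1$ vertices and degree distribution sequence $d_S=(l,u,d_2,\dots,d_{m-1})$. Let $A_S(z)=\sum_{n\ge 0} a_{\mathcal{B}_n}(S)\,z^n$, where $a_{\mathcal{B}_n}(S)$ is the total number of (plane) embeddings of $S$ into all trees of $\mathcal{B}_n$. Then $$A_S(z)=\left(\frac{1}{1-2zB(z)}\right)^{m+l-1} z^{l+u-1}\, B(z)^{l+u}\, 2^u \prod_{i=3}^{m-1}(\boldsymbol{C}_{i-1})^{d_i},$$ where $B(z)=\frac{1-\sqrt{1-4z^2}}{2z}=\sum_{k\ge0}\boldsymbol{C}_k z^{2k+1}$ is the generating function of plane binary trees (by number of nodes).
   Context: $\mathcal{B}_n$ is the set of plane (ordered) binary trees with $n$ nodes, where every node has either $0$ or $2$ children and the left-to-right order of children matters; edges are directed from parent to child. $\boldsymbol{C}_k=\frac{1}{k+1}\binom{2k}{k}$ is the $k$-th Catalan number. For a rooted tree $S$ with $m$ vertices, its degree distribution sequence is $(d_0,d_1,\dots,d_{m-1})$ where $d_i$ is the number of vertices of out-degree (number of children) $i$; $l=d_0$ is the number of leaves and $u=d_1$ the number of unary vertices. A rooted tree $T$ is viewed as a poset on its vertices in which $v\le w$ iff $w$ is an ancestor of $v$ or $w=v$ (the root is the unique maximal element). For incomparable vertices $x,y$ of a plane tree, $x$ is left of $y$ if, at their lowest common ancestor, the child whose subtree contains $x$ precedes the child whose subtree contains $y$. A (plane) embedding of a plane rooted tree $S$ into a plane rooted tree $T$ is a subset $E$ of vertices of $T$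 such that the induced subposet on $E$ is isomorphic to the poset of $S$ via an isomorphism that respects the left-to-right order of the children of each vertex of $S$. $a_T(S)$ denotes the number of embeddings of $S$ into $T$, and for a finite family $\mathcal{F}$, $a_{\mathcal{F}}(S)=\sum_{T\in\mathcal{F}}a_T(S)$. *)

theory Defs
  imports Complex_Main "HOL-Computational_Algebra.Formal_Power_Series"
begin

datatype ptree = Node (kids: "ptree list")

text \<open>Vertices are addressed by paths (lists of child indices) from the root.\<close>
fun subtree_at :: "ptree \<Rightarrow> nat list \<Rightarrow> ptree option" where
  "subtree_at t [] = Some t"
| "subtree_at (Node ts) (i # p) = (if i < length ts then subtree_at (ts ! i) p else None)"

definition verts :: "ptree \<Rightarrow> nat list set" where
  "verts t = {p. subtree_at t p \<noteq> None}"

definition outdeg :: "ptree \<Rightarrow> nat list \<Rightarrow> nat" where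
  "outdeg t p = length (kids (the (subtree_at t p)))"

definition nverts :: "ptree \<Rightarrow> nat" where
  "nverts t = card (verts t)"

definition degdist :: "ptree \<Rightarrow> nat \<Rightarrow> nat" where
  "degdist t i = card {p \<in> verts t. outdeg t p = i}"

definition binary_trees :: "nat \<Rightarrow> ptree set" where
  "binary_trees n = {T. (\<forall>p\<in>verts T. outdeg T p = 0 \<or> outdeg T p = 2) \<and> nverts T = n}"

text \<open>Poset order: v \<le> w iff w is an ancestor of v or w = v, i.e. w's address is a prefix of v's.\<close>
definition tle :: "nat list \<Rightarrow> nat list \<Rightarrow> bool" where
  "tle v w \<longleftrightarrow> (\<exists>r. v = w @ r)"

text \<open>x is left of y: at their lowest common ancestor, the child containing x
  precedes the child containing y (this forces x and y incomparable).\<close>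
definition left_of :: "nat list \<Rightarrow> nat list \<Rightarrow> bool" where
  "left_of x y \<longleftrightarrow> (\<exists>q i j r s. x = q @ i # r \<and> y = q @ j # s \<and> i < j)"

definition embeddings :: "ptree \<Rightarrow> ptree \<Rightarrow> nat list set set" where
  "embeddings S T = {E. E \<subseteq> verts T \<and>
     (\<exists>f. bij_betw f (verts S) E \<and>
          (\<forall>x\<in>verts S. \<forall>y\<in>verts S. tle x y \<longleftrightarrow> tle (f x) (f y)) \<and>
          (\<forall>s\<in>verts S. \<forall>i j. i < j \<and> j < outdeg S s \<longrightarrow>
              left_of (f (s @ [i])) (f (s @ [j]))))}"

definition emb_count :: "ptree \<Rightarrow> ptree \<Rightarrow> nat" where
  "emb_count T S = card (embeddings S T)"

definition emb_count_family :: "ptree set \<Rightarrow> ptree \<Rightarrow> nat" where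
  "emb_count_family F S = (\<Sum>T\<in>F. emb_count T S)"

definition catalan :: "nat \<Rightarrow> real" where
  "catalan k = real (2 * k choose k) / real (k + 1)"

definition Bfps :: "real fps" where
  "Bfps = Abs_fps (\<lambda>n. if odd n then catalan ((n - 1) div 2) else 0)"

definition A_fps :: "ptree \<Rightarrow> real fps" where
  "A_fps S = Abs_fps (\<lambda>n. real (emb_count_family (binary_trees n) S))"

end

(*
  Count embeddings of forests (lists ts of plane trees) into plane binary trees T, and let
  G(ts) and N(ts) be the generating functions, over all binary trees, of all embeddings and of
  those avoiding the root of T. A root-avoiding embedding into T = Node [L, R] sends the first j
  trees of the forest into L and the others into R, so

    N(ts) = [ts = []] z + z * sum_(j <= length ts) G(take j ts) G(drop j ts),

  while G(ts) = N(ts) unless ts is a single tree, and G[Node ts] = N(ts) + N[Node ts] according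
  to whether the root of the tree goes to the root of T. For the empty forest this is
  G[] = z + z G[]^2, which singles out the Catalan series B (through the first-order linear ODE
  that both satisfy) and yields Segner's convolution for the Catalan numbers. With
  D = 1 / (1 - 2 z B) the equations solve to G(ts) = C_(k-1) (z D)^(k-1) prod_i G[S_i] for a
  forest of k >= 1 trees, so z D G[S] is a product over the vertices of S of weights depending
  only on the out-degree; grouping the vertices by out-degree gives the formula.
*)

theory Submission
  imports Defs
begin

unbundle fps_syntax

section \<open>Paths in plane trees\<close>

lemma Nil_in_verts [simp]: "[] \<in> verts t"
  by (simp add: verts_def)

lemma Cons_in_verts_Node [simp]:
  "i # p \<in> verts (Node ts) \<longleftrightarrow> i < length ts \<and> p \<in> verts (ts ! i)"
  by (simp add: verts_def)

lemma verts_Node: "verts (Node ts) = insert [] (\<Union>i<length ts. (#) i ` verts (ts ! i))"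
proof (intro set_eqI iffI)
  fix p assume "p \<in> verts (Node ts)"
  then show "p \<in> insert [] (\<Union>i<length ts. (#) i ` verts (ts ! i))"
    by (cases p) auto
qed auto

lemma finite_verts [simp]: "finite (verts t)"
proof (induction t)
  case (Node ts)
  then show ?case by (subst verts_Node) auto
qed

lemma outdeg_Node_Nil [simp]: "outdeg (Node ts) [] = length ts"
  by (simp add: outdeg_def)

lemma outdeg_Node_Cons [simp]: "i < length ts \<Longrightarrow> outdeg (Node ts) (i # p) = outdeg (ts ! i) p"
  by (simp add: outdeg_def)

lemma snoc_in_verts_iff: "p @ [j] \<in> verts t \<longleftrightarrow> p \<in> verts t \<and> j < outdeg t p"
proof (induction p arbitrary: t)
  case Nil
  then show ?case by (cases t) simp
next
  case (Cons i p)
  show ?case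
  proof (cases t)
    case (Node ts)
    then show ?thesis using Cons.IH[of "ts ! i"] by (cases "i < length ts") simp_all
  qed
qed

lemma tle_refl [simp]: "tle x x"
  by (simp add: tle_def)

lemma tle_Nil [simp]: "tle x []"
  by (simp add: tle_def)

lemma Nil_tle_iff [simp]: "tle [] y \<longleftrightarrow> y = []"
  by (simp add: tle_def)

lemma tle_Cons_Cons [simp]: "tle (a # x) (b # y) \<longleftrightarrow> a = b \<and> tle x y"
  by (auto simp: tle_def)

lemma tle_antisym: "tle x y \<Longrightarrow> tle y x \<Longrightarrow> x = y"
  by (auto simp: tle_def)

lemma left_of_Nil1 [simp]: "\<not> left_of [] y"
  and left_of_Nil2 [simp]: "\<not> left_of x []"
  by (simp_all add: left_of_def)

lemma left_of_Cons_Cons [simp]: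
  "left_of (a # x) (b # y) \<longleftrightarrow> a < b \<or> (a = b \<and> left_of x y)"
proof
  assume "left_of (a # x) (b # y)"
  then obtain q i j r s where eqs: "a # x = q @ i # r" "b # y = q @ j # s" "i < j"
    by (auto simp: left_of_def)
  show "a < b \<or> (a = b \<and> left_of x y)"
  proof (cases q)
    case Nil
    then show ?thesis
      using eqs by simp
  next
    case (Cons c q')
    then show ?thesis
      using eqs unfolding left_of_def by auto
  qed
next
  assume "a < b \<or> (a = b \<and> left_of x y)"
  then show "left_of (a # x) (b # y)"
  proof
    assume "a < b"
    then show ?thesis
      unfolding left_of_def by (rule_tac x = "[]" in exI) auto
  next
    assume "a = b \<and> left_of x y"
    then obtain q i j r s where "x = q @ i # r" "y = q @ j # s" "i < j" "a = b"
      by (auto simp: left_of_def)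
    then show ?thesis
      unfolding left_of_def by (rule_tac x = "a # q" in exI) auto
  qed
qed

lemma left_of_imp_not_tle: "left_of x y \<Longrightarrow> \<not> tle x y \<and> \<not> tle y x"
proof (induction x arbitrary: y)
  case (Cons a x)
  then show ?case by (cases y) auto
qed simp

section \<open>Embeddings of forests\<close>

text \<open>A forest \<open>ts\<close> is addressed like the children of a virtual root: its \<open>i\<close>-th tree
  occupies the paths \<open>i # p\<close>.\<close>

definition forest_verts :: "ptree list \<Rightarrow> nat list set" where
  "forest_verts ts = verts (Node ts) - {[]}"

definition forest_emb :: "ptree list \<Rightarrow> ptree \<Rightarrow> (nat list \<Rightarrow> nat list) \<Rightarrow> bool" where
  "forest_emb ts T f \<longleftrightarrow> f ` forest_verts ts \<subseteq> verts T \<and>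
     (\<forall>x\<in>forest_verts ts. \<forall>y\<in>forest_verts ts. tle x y \<longleftrightarrow> tle (f x) (f y)) \<and>
     (\<forall>x\<in>forest_verts ts. \<forall>y\<in>forest_verts ts. left_of x y \<longrightarrow> left_of (f x) (f y))"

definition forest_embeddings :: "ptree list \<Rightarrow> ptree \<Rightarrow> nat list set set" where
  "forest_embeddings ts T = {f ` forest_verts ts | f. forest_emb ts T f}"

definition nonroot_embeddings :: "ptree list \<Rightarrow> ptree \<Rightarrow> nat list set set" where
  "nonroot_embeddings ts T = {E \<in> forest_embeddings ts T. [] \<notin> E}"

lemma Cons_in_forest_verts [simp]:
  "i # p \<in> forest_verts ts \<longleftrightarrow> i < length ts \<and> p \<in> verts (ts ! i)"
  by (simp add: forest_verts_def)

lemma Nil_notin_forest_verts [simp]: "[] \<notin> forest_verts ts"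
  by (simp add: forest_verts_def)

lemma finite_forest_verts [simp]: "finite (forest_verts ts)"
  by (simp add: forest_verts_def)

lemma forest_verts_Nil [simp]: "forest_verts [] = {}"
  by (auto simp: forest_verts_def verts_Node)

lemma forest_verts_single: "forest_verts [S] = (#) 0 ` verts S"
proof (intro set_eqI iffI)
  fix x assume "x \<in> forest_verts [S]"
  then show "x \<in> (#) 0 ` verts S" by (cases x) auto
qed auto

lemma snoc_in_forest_verts_less:
  "s @ [b] \<in> forest_verts ts \<Longrightarrow> a < b \<Longrightarrow> s @ [a] \<in> forest_verts ts"
  by (auto simp: forest_verts_def snoc_in_verts_iff)

lemma append_in_verts_imp: "p @ r \<in> verts t \<Longrightarrow> p \<in> verts t"
proof (induction p arbitrary: t)
  case (Cons i p)
  then show ?case by (cases t) auto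
qed simp

lemma left_of_below:
  assumes "left_of a b" "tle a' a" "tle b' b"
  shows "left_of a' b'"
proof -
  obtain q i j r s where "a = q @ i # r" "b = q @ j # s" "i < j"
    using assms(1) by (auto simp: left_of_def)
  moreover obtain r' s' where "a' = a @ r'" "b' = b @ s'"
    using assms(2,3) by (auto simp: tle_def)
  ultimately show ?thesis
    unfolding left_of_def by (rule_tac x = q in exI) auto
qed

lemma left_of_snoc: "i < j \<Longrightarrow> left_of (s @ [i]) (s @ [j])"
  unfolding left_of_def by (rule_tac x = s in exI) auto

lemma forest_emb_iff_siblings:
  "forest_emb ts T f \<longleftrightarrow> f ` forest_verts ts \<subseteq> verts T \<and>
     (\<forall>x\<in>forest_verts ts. \<forall>y\<in>forest_verts ts. tle x y \<longleftrightarrow> tle (f x) (f y)) \<and>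
     (\<forall>s i j. s @ [j] \<in> forest_verts ts \<longrightarrow> i < j \<longrightarrow> left_of (f (s @ [i])) (f (s @ [j])))"
  (is "_ \<longleftrightarrow> ?img \<and> ?tle \<and> ?sib")
proof -
  have "left_of (f x) (f y)"
    if ?tle ?sib "x \<in> forest_verts ts" "y \<in> forest_verts ts" "left_of x y" for x y
  proof -
    obtain q i j r s where xy: "x = q @ i # r" "y = q @ j # s" "i < j"
      using \<open>left_of x y\<close> by (auto simp: left_of_def)
    have "(q @ [j]) @ s \<in> verts (Node ts)"
      using \<open>y \<in> forest_verts ts\<close> by (simp add: xy(2) forest_verts_def)
    then have qj: "q @ [j] \<in> forest_verts ts"
      unfolding forest_verts_def using append_in_verts_imp by simp
    then have qi: "q @ [i] \<in> forest_verts ts"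
      using snoc_in_forest_verts_less \<open>i < j\<close> by simp
    have "tle x (q @ [i])" "tle y (q @ [j])"
      using xy by (auto simp: tle_def)
    then have "tle (f x) (f (q @ [i]))" "tle (f y) (f (q @ [j]))"
      using \<open>?tle\<close> that(3,4) qi qj by auto
    moreover have "left_of (f (q @ [i])) (f (q @ [j]))"
      using \<open>?sib\<close> qj \<open>i < j\<close> by simp
    ultimately show ?thesis
      using left_of_below by blast
  qed
  moreover have "?sib" if "\<forall>x\<in>forest_verts ts. \<forall>y\<in>forest_verts ts. left_of x y \<longrightarrow> left_of (f x) (f y)"
    using that snoc_in_forest_verts_less left_of_snoc by simp
  ultimately show ?thesis
    unfolding forest_emb_def by blast
qed

lemma forest_embD:
  assumes "forest_emb ts T f" "x \<in> forest_verts ts" "y \<in> forest_verts ts"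
  shows "f x \<in> verts T" "tle x y \<longleftrightarrow> tle (f x) (f y)" "left_of x y \<Longrightarrow> left_of (f x) (f y)"
  using assms unfolding forest_emb_def by blast+

lemma forest_emb_cong:
  assumes "\<And>x. x \<in> forest_verts ts \<Longrightarrow> f x = g x"
  shows "forest_emb ts T f \<longleftrightarrow> forest_emb ts T g"
  using assms unfolding forest_emb_def by (auto simp: image_def)

lemma forest_emb_inj_on: "forest_emb ts T f \<Longrightarrow> inj_on f (forest_verts ts)"
  unfolding forest_emb_def inj_on_def by (metis tle_antisym tle_refl)

lemma forest_emb_Cons_iff:
  assumes "a < length us"
  shows "forest_emb ts (Node us) (\<lambda>x. a # g x) \<longleftrightarrow> forest_emb ts (us ! a) g"
  using assms unfolding forest_emb_def by (auto simp: image_subset_iff)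

lemma forest_emb_single_iff:
  "forest_emb [S] T f \<longleftrightarrow> f ` (#) 0 ` verts S \<subseteq> verts T \<and>
     (\<forall>x\<in>verts S. \<forall>y\<in>verts S. tle x y \<longleftrightarrow> tle (f (0 # x)) (f (0 # y))) \<and>
     (\<forall>s\<in>verts S. \<forall>i j. i < j \<and> j < outdeg S s \<longrightarrow> left_of (f (0 # s @ [i])) (f (0 # s @ [j])))"
proof -
  have "s @ [j] \<in> forest_verts [S] \<longleftrightarrow>
      (s = [] \<and> j = 0) \<or> (\<exists>s'. s = 0 # s' \<and> s' \<in> verts S \<and> j < outdeg S s')" for s j
    by (cases s) (auto simp: snoc_in_verts_iff)
  then have "(\<forall>s i j. s @ [j] \<in> forest_verts [S] \<longrightarrow> i < j \<longrightarrow> left_of (f (s @ [i])) (f (s @ [j]))) \<longleftrightarrow>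
      (\<forall>s\<in>verts S. \<forall>i j. i < j \<and> j < outdeg S s \<longrightarrow> left_of (f (0 # s @ [i])) (f (0 # s @ [j])))"
    by (auto simp del: Cons_in_forest_verts) (metis append_Cons)
  then show ?thesis
    unfolding forest_emb_iff_siblings by (simp add: forest_verts_single)
qed

lemma embeddings_eq_forest_embeddings: "embeddings S T = forest_embeddings [S] T"
proof (intro set_eqI iffI)
  fix E assume "E \<in> embeddings S T"
  then obtain f where "E \<subseteq> verts T" "bij_betw f (verts S) E"
    and "\<forall>x\<in>verts S. \<forall>y\<in>verts S. tle x y \<longleftrightarrow> tle (f x) (f y)"
    and "\<forall>s\<in>verts S. \<forall>i j. i < j \<and> j < outdeg S s \<longrightarrow> left_of (f (s @ [i])) (f (s @ [j]))"
    unfolding embeddings_def by blast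
  moreover have "(\<lambda>x. f (tl x)) ` forest_verts [S] = E"
    using \<open>bij_betw f (verts S) E\<close> by (auto simp: forest_verts_single bij_betw_def image_image)
  ultimately have "forest_emb [S] T (\<lambda>x. f (tl x))" and "E = (\<lambda>x. f (tl x)) ` forest_verts [S]"
    unfolding forest_emb_single_iff by (auto simp: forest_verts_single image_image)
  then show "E \<in> forest_embeddings [S] T"
    unfolding forest_embeddings_def by blast
next
  fix E assume "E \<in> forest_embeddings [S] T"
  then obtain g where g: "forest_emb [S] T g" and E: "E = g ` forest_verts [S]"
    unfolding forest_embeddings_def by blast
  have "bij_betw (\<lambda>x. g (0 # x)) (verts S) E"
    using forest_emb_inj_on[OF g] unfolding E bij_betw_def forest_verts_single
    by (auto simp: inj_on_def image_image)
  then show "E \<in> embeddings S T"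
    using g unfolding embeddings_def forest_emb_single_iff E forest_verts_single
    by (auto simp: image_image)
qed

fun map_root :: "(nat \<Rightarrow> nat) \<Rightarrow> nat list \<Rightarrow> nat list" where
  "map_root h [] = []"
| "map_root h (i # p) = h i # p"

lemma tle_map_root_iff: "inj h \<Longrightarrow> tle (map_root h x) (map_root h y) \<longleftrightarrow> tle x y"
  by (cases x; cases y) (auto simp: inj_eq)

lemma left_of_map_root_iff: "strict_mono h \<Longrightarrow> left_of (map_root h x) (map_root h y) \<longleftrightarrow> left_of x y"
  by (cases x; cases y) (auto simp: strict_mono_less strict_mono_eq)

lemma forest_verts_append:
  "forest_verts (xs @ ys) = forest_verts xs \<union> map_root (\<lambda>i. i + length xs) ` forest_verts ys"
proof (intro set_eqI iffI)
  fix x assume x: "x \<in> forest_verts (xs @ ys)"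
  then obtain i p where "x = i # p" by (cases x) auto
  show "x \<in> forest_verts xs \<union> map_root (\<lambda>i. i + length xs) ` forest_verts ys"
  proof (cases "i < length xs")
    case True
    then show ?thesis using x \<open>x = i # p\<close> by (simp add: nth_append)
  next
    case False
    then have "x = map_root (\<lambda>i. i + length xs) ((i - length xs) # p)"
      and "(i - length xs) # p \<in> forest_verts ys"
      using x \<open>x = i # p\<close> by (auto simp: nth_append)
    then show ?thesis by blast
  qed
next
  fix x assume "x \<in> forest_verts xs \<union> map_root (\<lambda>i. i + length xs) ` forest_verts ys"
  then show "x \<in> forest_verts (xs @ ys)"
  proof
    assume "x \<in> forest_verts xs"
    then show ?thesis by (cases x) (auto simp: nth_append)
  next
    assume "x \<in> map_root (\<lambda>i. i + length xs) ` forest_verts ys"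
    then obtain y where "y \<in> forest_verts ys" "x = map_root (\<lambda>i. i + length xs) y" by blast
    then show ?thesis by (cases y) (auto simp: nth_append)
  qed
qed

lemma forest_emb_subforest:
  "forest_verts xs \<subseteq> forest_verts ys \<Longrightarrow> forest_emb ys T f \<Longrightarrow> forest_emb xs T f"
  unfolding forest_emb_def by blast

lemma forest_emb_append_left: "forest_emb (xs @ ys) T f \<Longrightarrow> forest_emb xs T f"
  by (rule forest_emb_subforest) (auto simp: forest_verts_append)

lemma forest_emb_append_right:
  assumes "forest_emb (xs @ ys) T f"
  shows "forest_emb ys T (\<lambda>y. f (map_root (\<lambda>i. i + length xs) y))"
  unfolding forest_emb_def
proof (intro conjI ballI impI)
  let ?sh = "map_root (\<lambda>i. i + length xs)"
  have mono: "inj (\<lambda>i. i + length xs)" "strict_mono (\<lambda>i. i + length xs)"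
    by (auto simp: inj_def strict_mono_def)
  have sh: "?sh y \<in> forest_verts (xs @ ys)" if "y \<in> forest_verts ys" for y
    using that by (auto simp: forest_verts_append)
  show "(\<lambda>y. f (?sh y)) ` forest_verts ys \<subseteq> verts T"
    using forest_embD(1)[OF assms sh sh] by blast
  fix x y assume "x \<in> forest_verts ys" "y \<in> forest_verts ys"
  then show "tle x y \<longleftrightarrow> tle (f (?sh x)) (f (?sh y))"
    and "left_of x y \<Longrightarrow> left_of (f (?sh x)) (f (?sh y))"
    using forest_embD(2,3)[OF assms sh[of x] sh[of y]]
    by (simp_all add: tle_map_root_iff[OF mono(1)] left_of_map_root_iff[OF mono(2)])
qed

definition glue_roots :: "nat \<Rightarrow> (nat list \<Rightarrow> 'a) \<Rightarrow> (nat list \<Rightarrow> 'a) \<Rightarrow> nat list \<Rightarrow> 'a" where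
  "glue_roots k f g x = (if hd x < k then f x else g (map_root (\<lambda>i. i - k) x))"

lemma glue_roots_left: "x \<in> forest_verts xs \<Longrightarrow> glue_roots (length xs) f g x = f x"
  by (cases x) (auto simp: glue_roots_def)

lemma glue_roots_right:
  "y \<in> forest_verts ys \<Longrightarrow> glue_roots (length xs) f g (map_root (\<lambda>i. i + length xs) y) = g y"
  by (cases y) (auto simp: glue_roots_def)

lemma glue_roots_image:
  "glue_roots (length xs) f g ` forest_verts (xs @ ys) = f ` forest_verts xs \<union> g ` forest_verts ys"
  by (auto simp: forest_verts_append image_Un image_image glue_roots_left glue_roots_right
      cong: image_cong)

lemma forest_emb_append:
  assumes f: "forest_emb xs T f" and g: "forest_emb ys T g"
    and fg: "\<And>x y. x \<in> forest_verts xs \<Longrightarrow> y \<in> forest_verts ys \<Longrightarrow> left_of (f x) (g y)"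
  shows "forest_emb (xs @ ys) T (glue_roots (length xs) f g)"
proof -
  let ?F = "glue_roots (length xs) f g" and ?sh = "map_root (\<lambda>i. i + length xs)"
  have mono: "inj (\<lambda>i. i + length xs)" "strict_mono (\<lambda>i. i + length xs)"
    by (auto simp: inj_def strict_mono_def)
  have sep: "\<not> tle x (?sh y) \<and> \<not> tle (?sh y) x \<and> left_of x (?sh y) \<and> \<not> left_of (?sh y) x"
    if "x \<in> forest_verts xs" "y \<in> forest_verts ys" for x y
    using that by (cases x; cases y) auto
  have sep': "\<not> tle (f x) (g y) \<and> \<not> tle (g y) (f x)"
    if "x \<in> forest_verts xs" "y \<in> forest_verts ys" for x y
    using fg that left_of_imp_not_tle by blast
  have parts: "(\<exists>x\<in>forest_verts xs. u = x \<and> ?F u = f x) \<or> (\<exists>y\<in>forest_verts ys. u = ?sh y \<and> ?F u = g y)"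
    if "u \<in> forest_verts (xs @ ys)" for u
    using that by (auto simp: forest_verts_append glue_roots_left glue_roots_right)
  show ?thesis
    unfolding forest_emb_def
  proof (intro conjI ballI impI)
    show "?F ` forest_verts (xs @ ys) \<subseteq> verts T"
      using forest_embD(1)[OF f] forest_embD(1)[OF g] by (auto simp: glue_roots_image)
  next
    fix u v assume "u \<in> forest_verts (xs @ ys)" "v \<in> forest_verts (xs @ ys)"
    then show "tle u v \<longleftrightarrow> tle (?F u) (?F v)"
      using parts[of u] parts[of v] sep sep' forest_embD(2)[OF f] forest_embD(2)[OF g]
      by (auto simp: tle_map_root_iff[OF mono(1)])
  next
    fix u v assume "u \<in> forest_verts (xs @ ys)" "v \<in> forest_verts (xs @ ys)" "left_of u v"
    then show "left_of (?F u) (?F v)"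
      using parts[of u] parts[of v] sep fg forest_embD(3)[OF f] forest_embD(3)[OF g]
      by (auto simp: left_of_map_root_iff[OF mono(2)])
  qed
qed

lemma finite_forest_embeddings [simp]: "finite (forest_embeddings ts T)"
proof (rule finite_subset)
  show "forest_embeddings ts T \<subseteq> Pow (verts T)"
    unfolding forest_embeddings_def forest_emb_def by auto
qed simp

lemma card_in_forest_embeddings: "E \<in> forest_embeddings ts T \<Longrightarrow> card E = card (forest_verts ts)"
  unfolding forest_embeddings_def using forest_emb_inj_on card_image by blast

lemma forest_embeddings_Nil: "forest_embeddings [] T = {{}}"
  unfolding forest_embeddings_def forest_emb_def by auto

lemma Nil_notin_forest_embeddings:
  assumes "length ts \<noteq> 1" "E \<in> forest_embeddings ts T"
  shows "[] \<notin> E"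
proof
  assume "[] \<in> E"
  then obtain f x where f: "forest_emb ts T f" and x: "x \<in> forest_verts ts" "f x = []"
    using assms(2) unfolding forest_embeddings_def by auto
  then obtain i p where "x = i # p" by (cases x) auto
  define i' :: nat where "i' = (if i = 0 then 1 else 0)"
  have "i' < length ts"
    using assms(1) x \<open>x = i # p\<close> by (auto simp: i'_def)
  then have "tle [i'] x"
    using forest_embD(2)[OF f _ x(1), of "[i']"] x(2) by simp
  then show False
    using \<open>x = i # p\<close> by (simp add: i'_def split: if_splits)
qed

lemma nonroot_embeddings_eq: "length ts \<noteq> 1 \<Longrightarrow> nonroot_embeddings ts T = forest_embeddings ts T"
  unfolding nonroot_embeddings_def using Nil_notin_forest_embeddings by blast

lemma nonroot_embeddings_leaf: "nonroot_embeddings ts (Node []) = (if ts = [] then {{}} else {})"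
proof (cases ts)
  case Nil
  then show ?thesis by (auto simp: nonroot_embeddings_def forest_embeddings_Nil)
next
  case (Cons S ts')
  have "[] \<in> E" if E: "E \<in> forest_embeddings ts (Node [])" for E
  proof -
    obtain f where "forest_emb ts (Node []) f" "E = f ` forest_verts ts"
      using E unfolding forest_embeddings_def by blast
    moreover have "[0] \<in> forest_verts ts"
      using Cons by simp
    moreover have "verts (Node []) = {[]}"
      by (simp add: verts_Node)
    ultimately show ?thesis
      using forest_embD(1) by (metis image_eqI singletonD)
  qed
  then show ?thesis
    using Cons by (auto simp: nonroot_embeddings_def)
qed

lemma forest_verts_single_Node: "forest_verts [Node ts] = insert [0] ((#) 0 ` forest_verts ts)"
  by (auto simp: forest_verts_single forest_verts_def verts_Node)

lemma forest_emb_single_Node_root_iff: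
  assumes "f [0] = []"
  shows "forest_emb [Node ts] T f \<longleftrightarrow>
    forest_emb ts T (\<lambda>x. f (0 # x)) \<and> [] \<notin> (\<lambda>x. f (0 # x)) ` forest_verts ts"
proof
  assume f: "forest_emb [Node ts] T f"
  have mem: "0 # x \<in> forest_verts [Node ts]" if "x \<in> forest_verts ts" for x
    using that by (simp add: forest_verts_single_Node)
  have "forest_emb ts T (\<lambda>x. f (0 # x))"
    unfolding forest_emb_def
  proof (intro conjI ballI impI)
    show "(\<lambda>x. f (0 # x)) ` forest_verts ts \<subseteq> verts T"
      using forest_embD(1)[OF f mem mem] by blast
    fix x y assume "x \<in> forest_verts ts" "y \<in> forest_verts ts"
    then show "tle x y \<longleftrightarrow> tle (f (0 # x)) (f (0 # y))"
      and "left_of x y \<Longrightarrow> left_of (f (0 # x)) (f (0 # y))"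
      using forest_embD(2,3)[OF f mem mem] by simp_all
  qed
  moreover have "f (0 # x) \<noteq> []" if "x \<in> forest_verts ts" for x
  proof
    assume "f (0 # x) = []"
    then have "0 # x = [0]"
      using inj_onD[OF forest_emb_inj_on[OF f] _ mem[OF that], of "[0]"] assms
      by (simp add: forest_verts_single_Node)
    then show False
      using that by simp
  qed
  ultimately show "forest_emb ts T (\<lambda>x. f (0 # x)) \<and> [] \<notin> (\<lambda>x. f (0 # x)) ` forest_verts ts"
    by (auto dest: sym)
next
  assume "forest_emb ts T (\<lambda>x. f (0 # x)) \<and> [] \<notin> (\<lambda>x. f (0 # x)) ` forest_verts ts"
  then have g: "forest_emb ts T (\<lambda>x. f (0 # x))" and nz: "\<And>x. x \<in> forest_verts ts \<Longrightarrow> f (0 # x) \<noteq> []"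
    by (auto simp: image_iff)
  show "forest_emb [Node ts] T f"
    unfolding forest_emb_def forest_verts_single_Node
    using forest_embD[OF g] nz assms by (auto simp: tle_def)
qed

lemma root_embeddings_single_Node:
  "{E \<in> forest_embeddings [Node ts] T. [] \<in> E} = insert [] ` nonroot_embeddings ts T"
proof (intro set_eqI iffI)
  fix E assume "E \<in> {E \<in> forest_embeddings [Node ts] T. [] \<in> E}"
  then obtain f x where f: "forest_emb [Node ts] T f" and E: "E = f ` forest_verts [Node ts]"
    and x: "x \<in> forest_verts [Node ts]" "f x = []"
    unfolding forest_embeddings_def by auto
  have "tle [0] x"
    using forest_embD(2)[OF f _ x(1), of "[0]"] x(2) by (simp add: forest_verts_single_Node)
  then have "x = [0]"
    using x(1) by (auto simp: forest_verts_single_Node tle_def)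
  then have "forest_emb ts T (\<lambda>x. f (0 # x)) \<and> [] \<notin> (\<lambda>x. f (0 # x)) ` forest_verts ts"
    using forest_emb_single_Node_root_iff f x(2) by blast
  moreover have "E = insert [] ((\<lambda>x. f (0 # x)) ` forest_verts ts)"
    using E x(2) \<open>x = [0]\<close> by (auto simp: forest_verts_single_Node)
  ultimately show "E \<in> insert [] ` nonroot_embeddings ts T"
    unfolding nonroot_embeddings_def forest_embeddings_def by blast
next
  fix E assume "E \<in> insert [] ` nonroot_embeddings ts T"
  then obtain g where g: "forest_emb ts T g" "[] \<notin> g ` forest_verts ts"
    and E: "E = insert [] (g ` forest_verts ts)"
    unfolding nonroot_embeddings_def forest_embeddings_def by auto
  define f where "f x = (if x = [0] then [] else g (tl x))" for x
  have "(\<lambda>x. f (0 # x)) ` forest_verts ts = g ` forest_verts ts"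
    by (auto simp: f_def)
  moreover have "forest_emb ts T (\<lambda>x. f (0 # x))"
    using g(1) by (subst forest_emb_cong[where g = g]) (auto simp: f_def)
  ultimately have "forest_emb [Node ts] T f"
    using forest_emb_single_Node_root_iff[of f] g(2) by (simp add: f_def)
  moreover have "f ` forest_verts [Node ts] = insert (f [0]) ((\<lambda>x. f (0 # x)) ` forest_verts ts)"
    by (simp add: forest_verts_single_Node image_image)
  then have "E = f ` forest_verts [Node ts]"
    using E \<open>(\<lambda>x. f (0 # x)) ` forest_verts ts = g ` forest_verts ts\<close> by (simp add: f_def)
  ultimately show "E \<in> {E \<in> forest_embeddings [Node ts] T. [] \<in> E}"
    unfolding forest_embeddings_def using E by blast
qed

lemma card_forest_embeddings_single_Node:
  "card (forest_embeddings [Node ts] T) = card (nonroot_embeddings ts T) + card (nonroot_embeddings [Node ts] T)"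
proof -
  let ?R = "{E \<in> forest_embeddings [Node ts] T. [] \<in> E}"
  have "card (forest_embeddings [Node ts] T) = card (?R \<union> nonroot_embeddings [Node ts] T)"
    by (rule arg_cong[where f = card]) (auto simp: nonroot_embeddings_def)
  also have "\<dots> = card ?R + card (nonroot_embeddings [Node ts] T)"
    by (rule card_Un_disjoint) (auto simp: nonroot_embeddings_def)
  moreover have "inj_on (insert []) (nonroot_embeddings ts T)"
    unfolding inj_on_def nonroot_embeddings_def by (metis insert_ident mem_Collect_eq)
  then have "card ?R = card (nonroot_embeddings ts T)"
    by (simp add: root_embeddings_single_Node card_image)
  ultimately show ?thesis
    by simp
qed

lemma upward_closed_threshold:
  fixes P :: "nat \<Rightarrow> bool"
  assumes "\<And>i i'. i \<le> i' \<Longrightarrow> i' < k \<Longrightarrow> P i \<Longrightarrow> P i'"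
  shows "\<exists>j\<le>k. \<forall>i<k. P i \<longleftrightarrow> j \<le> i"
proof -
  define j where "j = (LEAST i. i = k \<or> P i)"
  have "j = k \<or> P j"
    unfolding j_def by (rule LeastI[of _ k]) simp
  have "j \<le> i" if "i = k \<or> P i" for i
    unfolding j_def using that by (rule Least_le)
  then have "P i \<longleftrightarrow> j \<le> i" if "i < k" for i
    using \<open>j = k \<or> P j\<close> assms that by fastforce
  then show ?thesis
    using \<open>\<And>i. i = k \<or> P i \<Longrightarrow> j \<le> i\<close> by blast
qed

lemma nonroot_emb_Node2_threshold:
  assumes f: "forest_emb ts (Node [L, R]) f" and nz: "[] \<notin> f ` forest_verts ts"
  shows "\<exists>j\<le>length ts. \<forall>x\<in>forest_verts ts. \<exists>w. f x = (if hd x < j then 0 else 1) # w"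
proof -
  have hd_less: "f x \<noteq> [] \<and> hd (f x) < 2" if "x \<in> forest_verts ts" for x
    using forest_embD(1)[OF f that that] nz that by (cases "f x") (auto simp: image_iff)
  have hd_root: "hd (f (i # p)) = hd (f [i])" if "i # p \<in> forest_verts ts" for i p
  proof -
    have "[i] \<in> forest_verts ts"
      using that by simp
    then have "tle (f (i # p)) (f [i])"
      using forest_embD(2)[OF f that \<open>[i] \<in> forest_verts ts\<close>] by simp
    then show ?thesis
      using hd_less[OF \<open>[i] \<in> forest_verts ts\<close>] by (auto simp: tle_def hd_append)
  qed
  have mono: "hd (f [i]) \<le> hd (f [i'])" if "i < i'" "i' < length ts" for i i'
  proof -
    have "[i] \<in> forest_verts ts" "[i'] \<in> forest_verts ts"
      using that by simp_all
    then obtain a w b w' where "f [i] = a # w" "f [i'] = b # w'"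
      using hd_less by (meson list.exhaust)
    moreover have "left_of (f [i]) (f [i'])"
      using forest_embD(3)[OF f \<open>[i] \<in> forest_verts ts\<close> \<open>[i'] \<in> forest_verts ts\<close>] that by simp
    ultimately show ?thesis
      by (auto simp: le_less)
  qed
  have "hd (f [i']) = 1" if "i \<le> i'" "i' < length ts" "hd (f [i]) = 1" for i i'
  proof (cases "i = i'")
    case False
    then show ?thesis
      using mono[of i i'] that hd_less[of "[i']"] by simp
  qed (use that in simp)
  then obtain j where "j \<le> length ts" and j: "\<forall>i<length ts. hd (f [i]) = 1 \<longleftrightarrow> j \<le> i"
    using upward_closed_threshold[of "length ts" "\<lambda>i. hd (f [i]) = 1"] by blast
  have "\<exists>w. f x = (if hd x < j then 0 else 1) # w" if xv: "x \<in> forest_verts ts" for x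
  proof -
    obtain i p where x: "x = i # p"
      using xv by (cases x) auto
    have "i < length ts"
      using xv x by simp
    have "hd (f x) = hd (f [i])"
      using hd_root xv unfolding x by blast
    moreover have "hd (f [i]) < 2"
      using hd_less[of "[i]"] \<open>i < length ts\<close> by simp
    moreover have "hd (f [i]) = 1 \<longleftrightarrow> j \<le> i"
      using j \<open>i < length ts\<close> by simp
    ultimately have "hd (f x) = (if hd x < j then 0 else 1)"
      using x by (cases "i < j") simp_all
    moreover obtain a w where "f x = a # w"
      using hd_less[OF xv] by (cases "f x") simp_all
    ultimately show ?thesis
      by simp
  qed
  then show ?thesis
    using \<open>j \<le> length ts\<close> by blast
qed

definition branch_join :: "nat list set \<Rightarrow> nat list set \<Rightarrow> nat list set" where
  "branch_join E1 E2 = (#) 0 ` E1 \<union> (#) 1 ` E2"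

lemma branch_join_eq_iff: "branch_join E1 E2 = branch_join E1' E2' \<longleftrightarrow> E1 = E1' \<and> E2 = E2'"
proof
  assume eq: "branch_join E1 E2 = branch_join E1' E2'"
  have "E1 = {w. 0 # w \<in> branch_join E1 E2}" "E2 = {w. 1 # w \<in> branch_join E1 E2}"
    and "E1' = {w. 0 # w \<in> branch_join E1' E2'}" "E2' = {w. 1 # w \<in> branch_join E1' E2'}"
    by (auto simp: branch_join_def)
  then show "E1 = E1' \<and> E2 = E2'"
    using eq by simp
qed simp

lemma in_forest_verts_take_iff: "x \<in> forest_verts (take j ts) \<longleftrightarrow> x \<in> forest_verts ts \<and> hd x < j"
  by (cases x) auto

lemma nonroot_embeddings_Node2:
  "nonroot_embeddings ts (Node [L, R]) = (\<Union>j\<le>length ts.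
     (\<lambda>(E1, E2). branch_join E1 E2) ` (forest_embeddings (take j ts) L \<times> forest_embeddings (drop j ts) R))"
proof (intro set_eqI iffI)
  fix E assume "E \<in> nonroot_embeddings ts (Node [L, R])"
  then obtain f where f: "forest_emb ts (Node [L, R]) f" and E: "E = f ` forest_verts ts"
    and nz: "[] \<notin> f ` forest_verts ts"
    unfolding nonroot_embeddings_def forest_embeddings_def by auto
  obtain j where j: "j \<le> length ts"
    and side: "\<And>x. x \<in> forest_verts ts \<Longrightarrow> \<exists>w. f x = (if hd x < j then 0 else 1) # w"
    using nonroot_emb_Node2_threshold[OF f nz] by blast
  let ?xs = "take j ts" and ?ys = "drop j ts" and ?sh = "map_root (\<lambda>i. i + j)"
  have f': "forest_emb (?xs @ ?ys) (Node [L, R]) f" and len: "length ?xs = j"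
    using f j by simp_all
  have fv: "forest_verts ts = forest_verts ?xs \<union> ?sh ` forest_verts ?ys"
    using forest_verts_append[of ?xs ?ys] len by simp
  have left: "f x = 0 # tl (f x)" if "x \<in> forest_verts ?xs" for x
  proof -
    have "x \<in> forest_verts ts" "hd x < j"
      using that by (simp_all add: in_forest_verts_take_iff)
    then show ?thesis
      using side by force
  qed
  have right: "f (?sh y) = 1 # tl (f (?sh y))" if "y \<in> forest_verts ?ys" for y
  proof -
    have "?sh y \<in> forest_verts ts"
      using that fv by blast
    moreover have "\<not> hd (?sh y) < j"
      using that by (cases y) auto
    ultimately show ?thesis
      using side by force
  qed
  have "forest_emb ?xs (Node [L, R]) (\<lambda>x. 0 # tl (f x))"
    using forest_emb_append_left[OF f'] forest_emb_cong[OF left] by simp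
  then have emb1: "forest_emb ?xs L (\<lambda>x. tl (f x))"
    using forest_emb_Cons_iff[of 0 "[L, R]"] by simp
  have "forest_emb ?ys (Node [L, R]) (\<lambda>y. 1 # tl (f (?sh y)))"
    using forest_emb_append_right[OF f'] len forest_emb_cong[OF right] by simp
  then have emb2: "forest_emb ?ys R (\<lambda>y. tl (f (?sh y)))"
    using forest_emb_Cons_iff[of 1 "[L, R]"] by simp
  have "f ` forest_verts ?xs = (#) 0 ` (\<lambda>x. tl (f x)) ` forest_verts ?xs"
    unfolding image_image by (rule image_cong[OF refl left])
  moreover have "f ` ?sh ` forest_verts ?ys = (#) 1 ` (\<lambda>y. tl (f (?sh y))) ` forest_verts ?ys"
    unfolding image_image by (rule image_cong[OF refl right])
  ultimately have "E = branch_join ((\<lambda>x. tl (f x)) ` forest_verts ?xs) ((\<lambda>y. tl (f (?sh y))) ` forest_verts ?ys)"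
    unfolding E fv branch_join_def image_Un by simp
  then show "E \<in> (\<Union>j\<le>length ts.
     (\<lambda>(E1, E2). branch_join E1 E2) ` (forest_embeddings (take j ts) L \<times> forest_embeddings (drop j ts) R))"
    using j emb1 emb2 unfolding forest_embeddings_def by blast
next
  fix E assume "E \<in> (\<Union>j\<le>length ts.
     (\<lambda>(E1, E2). branch_join E1 E2) ` (forest_embeddings (take j ts) L \<times> forest_embeddings (drop j ts) R))"
  then obtain j f1 f2 where j: "j \<le> length ts"
    and f1: "forest_emb (take j ts) L f1" and f2: "forest_emb (drop j ts) R f2"
    and E: "E = branch_join (f1 ` forest_verts (take j ts)) (f2 ` forest_verts (drop j ts))"
    unfolding forest_embeddings_def by blast
  let ?F = "glue_roots (length (take j ts)) (\<lambda>x. 0 # f1 x) (\<lambda>y. 1 # f2 y)"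
  have "forest_emb (take j ts @ drop j ts) (Node [L, R]) ?F"
    using f1 f2 by (intro forest_emb_append) (simp_all add: forest_emb_Cons_iff)
  moreover have "?F ` forest_verts (take j ts @ drop j ts) = E"
    unfolding glue_roots_image E branch_join_def by (simp add: image_image)
  moreover have "[] \<notin> E"
    unfolding E branch_join_def by blast
  ultimately show "E \<in> nonroot_embeddings ts (Node [L, R])"
    unfolding nonroot_embeddings_def forest_embeddings_def by auto
qed

lemma strict_mono_on_card_forest_verts_take:
  "strict_mono_on {..length ts} (\<lambda>j. card (forest_verts (take j ts)))"
proof (rule strict_mono_onI)
  fix j j' assume "j \<in> {..length ts}" "j' \<in> {..length ts}" "j < j'"
  then have "forest_verts (take j ts) \<subseteq> forest_verts (take j' ts)"
    and "[j] \<in> forest_verts (take j' ts) - forest_verts (take j ts)"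
    by (auto simp: in_forest_verts_take_iff)
  then have "forest_verts (take j ts) \<subset> forest_verts (take j' ts)"
    by blast
  then show "card (forest_verts (take j ts)) < card (forest_verts (take j' ts))"
    by (rule psubset_card_mono[rotated]) simp
qed

lemma card_nonroot_embeddings_Node2:
  "card (nonroot_embeddings ts (Node [L, R])) =
     (\<Sum>j\<le>length ts. card (forest_embeddings (take j ts) L) * card (forest_embeddings (drop j ts) R))"
proof -
  let ?A = "\<lambda>j. (\<lambda>(E1, E2). branch_join E1 E2) `
    (forest_embeddings (take j ts) L \<times> forest_embeddings (drop j ts) R)"
  have inj: "inj_on (\<lambda>(E1, E2). branch_join E1 E2) X" for X
    by (auto simp: inj_on_def branch_join_eq_iff)
  have "?A j \<inter> ?A j' = {}" if "j \<le> length ts" "j' \<le> length ts" "j \<noteq> j'" for j j'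
  proof -
    have "card (forest_verts (take j ts)) \<noteq> card (forest_verts (take j' ts))"
      using strict_mono_on_imp_inj_on[OF strict_mono_on_card_forest_verts_take] that
      by (auto simp: inj_on_def)
    then show ?thesis
      by (auto simp: branch_join_eq_iff) (metis card_in_forest_embeddings)
  qed
  then have "card (\<Union>j\<le>length ts. ?A j) = (\<Sum>j\<le>length ts. card (?A j))"
    by (intro card_UN_disjoint) auto
  then show ?thesis
    by (simp add: nonroot_embeddings_Node2 card_image[OF inj] card_cartesian_product)
qed

section \<open>Generating functions over binary trees\<close>

lemma nverts_Node: "nverts (Node ts) = 1 + (\<Sum>i<length ts. nverts (ts ! i))"
proof -
  have "card (\<Union>i<length ts. (#) i ` verts (ts ! i)) = (\<Sum>i<length ts. card ((#) i ` verts (ts ! i)))"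
    by (rule card_UN_disjoint) auto
  moreover have "card (verts (Node ts)) = Suc (card (\<Union>i<length ts. (#) i ` verts (ts ! i)))"
    unfolding verts_Node by (rule card_insert_disjoint) auto
  ultimately show ?thesis
    unfolding nverts_def by (simp add: card_image)
qed

lemma nverts_Node2: "nverts (Node [L, R]) = nverts L + nverts R + 1"
  by (simp add: nverts_Node)

lemma ball_verts_Node:
  "(\<forall>p\<in>verts (Node ts). P (outdeg (Node ts) p)) \<longleftrightarrow>
     P (length ts) \<and> (\<forall>i<length ts. \<forall>p\<in>verts (ts ! i). P (outdeg (ts ! i) p))"
  by (auto simp: verts_Node)

definition is_binary :: "ptree \<Rightarrow> bool" where
  "is_binary T \<longleftrightarrow> (\<forall>p\<in>verts T. outdeg T p = 0 \<or> outdeg T p = 2)"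

lemma binary_trees_eq: "binary_trees n = {T. is_binary T \<and> nverts T = n}"
  by (simp add: binary_trees_def is_binary_def)

lemma is_binary_Node_iff:
  "is_binary (Node ts) \<longleftrightarrow> ts = [] \<or> (\<exists>L R. ts = [L, R] \<and> is_binary L \<and> is_binary R)"
proof -
  have "is_binary (Node ts) \<longleftrightarrow> (length ts = 0 \<or> length ts = 2) \<and> (\<forall>i<length ts. is_binary (ts ! i))"
    unfolding is_binary_def using ball_verts_Node[where P = "\<lambda>d. d = 0 \<or> d = 2"] by simp
  also have "\<dots> \<longleftrightarrow> ts = [] \<or> (\<exists>L R. ts = [L, R] \<and> is_binary L \<and> is_binary R)"
    by (auto simp: numeral_2_eq_2 length_Suc_conv less_Suc_eq)
  finally show ?thesis .
qed

lemma Node_in_binary_trees_iff: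
  "Node ts \<in> binary_trees n \<longleftrightarrow> (ts = [] \<and> n = 1) \<or>
     (\<exists>i<n. \<exists>L R. ts = [L, R] \<and> L \<in> binary_trees i \<and> R \<in> binary_trees (n - 1 - i))"
  by (auto simp: binary_trees_eq is_binary_Node_iff nverts_Node2) (auto simp: nverts_Node)

lemma binary_trees_decomp:
  "binary_trees n = (if n = 1 then {Node []} else {}) \<union>
     (\<Union>i<n. (\<lambda>(L, R). Node [L, R]) ` (binary_trees i \<times> binary_trees (n - 1 - i)))"
proof (intro set_eqI)
  fix T :: ptree
  show "T \<in> binary_trees n \<longleftrightarrow> T \<in> (if n = 1 then {Node []} else {}) \<union>
     (\<Union>i<n. (\<lambda>(L, R). Node [L, R]) ` (binary_trees i \<times> binary_trees (n - 1 - i)))"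
    by (cases T) (auto simp: Node_in_binary_trees_iff)
qed

lemma finite_binary_trees [simp]: "finite (binary_trees n)"
proof (induction n rule: less_induct)
  case (less n)
  then show ?case
    by (subst binary_trees_decomp) auto
qed

definition binary_gf :: "(ptree \<Rightarrow> real) \<Rightarrow> real fps" where
  "binary_gf \<phi> = Abs_fps (\<lambda>n. \<Sum>T\<in>binary_trees n. \<phi> T)"

lemma binary_gf_nth: "binary_gf \<phi> $ n = (\<Sum>T\<in>binary_trees n. \<phi> T)"
  by (simp add: binary_gf_def)

lemma binary_gf_rec:
  assumes leaf: "\<phi> (Node []) = c" and branch: "\<And>L R. \<phi> (Node [L, R]) = (\<Sum>j\<in>J. \<psi> j L * \<chi> j R)"
  shows "binary_gf \<phi> = fps_const c * fps_X + fps_X * (\<Sum>j\<in>J. binary_gf (\<psi> j) * binary_gf (\<chi> j))"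
proof (rule fps_ext)
  fix n
  let ?B = "\<lambda>i. binary_trees i \<times> binary_trees (n - 1 - i)"
  have inj: "inj_on (\<lambda>(L, R). Node [L, R]) X" for X
    by (auto simp: inj_on_def)
  have "(\<Sum>T\<in>(\<Union>i<n. (\<lambda>(L, R). Node [L, R]) ` ?B i). \<phi> T) =
      (\<Sum>i<n. \<Sum>T\<in>(\<lambda>(L, R). Node [L, R]) ` ?B i. \<phi> T)"
    by (rule sum.UNION_disjoint) (simp_all, auto simp: binary_trees_eq nverts_Node2)
  also have "\<dots> = (\<Sum>i<n. \<Sum>(L, R)\<in>?B i. \<Sum>j\<in>J. \<psi> j L * \<chi> j R)"
    by (intro sum.cong refl) (subst sum.reindex[OF inj], simp add: branch split_def)
  also have "\<dots> = (\<Sum>j\<in>J. \<Sum>i<n. binary_gf (\<psi> j) $ i * binary_gf (\<chi> j) $ (n - 1 - i))"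
    by (simp add: sum.swap[of _ J] sum.cartesian_product[symmetric] binary_gf_nth sum_product)
  finally have "binary_gf \<phi> $ n = (if n = 1 then c else 0) +
      (\<Sum>j\<in>J. \<Sum>i<n. binary_gf (\<psi> j) $ i * binary_gf (\<chi> j) $ (n - 1 - i))"
    unfolding binary_gf_nth by (subst binary_trees_decomp, subst sum.union_disjoint) (auto simp: leaf)
  moreover have "(\<Sum>j\<in>J. binary_gf (\<psi> j) * binary_gf (\<chi> j)) $ m =
      (\<Sum>j\<in>J. \<Sum>i\<le>m. binary_gf (\<psi> j) $ i * binary_gf (\<chi> j) $ (m - i))" for m
    by (simp add: fps_sum_nth fps_mult_nth atLeast0AtMost)
  ultimately show "binary_gf \<phi> $ n =
      (fps_const c * fps_X + fps_X * (\<Sum>j\<in>J. binary_gf (\<psi> j) * binary_gf (\<chi> j))) $ n"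
    by (cases n) (simp_all add: lessThan_Suc_atMost)
qed

definition forest_gf :: "ptree list \<Rightarrow> real fps" where
  "forest_gf ts = binary_gf (\<lambda>T. real (card (forest_embeddings ts T)))"

definition nonroot_gf :: "ptree list \<Rightarrow> real fps" where
  "nonroot_gf ts = binary_gf (\<lambda>T. real (card (nonroot_embeddings ts T)))"

lemma A_fps_eq_forest_gf: "A_fps S = forest_gf [S]"
  by (simp add: A_fps_def forest_gf_def binary_gf_def emb_count_family_def emb_count_def
      embeddings_eq_forest_embeddings)

lemma forest_gf_eq_nonroot_gf: "length ts \<noteq> 1 \<Longrightarrow> forest_gf ts = nonroot_gf ts"
  by (simp add: forest_gf_def nonroot_gf_def nonroot_embeddings_eq)

lemma forest_gf_single_Node_split: "forest_gf [Node ts] = nonroot_gf ts + nonroot_gf [Node ts]"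
  by (rule fps_ext)
    (simp add: forest_gf_def nonroot_gf_def binary_gf_nth card_forest_embeddings_single_Node sum.distrib)

lemma nonroot_gf_rec:
  "nonroot_gf ts = fps_const (if ts = [] then 1 else 0) * fps_X +
     fps_X * (\<Sum>j\<le>length ts. forest_gf (take j ts) * forest_gf (drop j ts))"
  unfolding nonroot_gf_def forest_gf_def
  by (rule binary_gf_rec) (simp_all add: nonroot_embeddings_leaf card_nonroot_embeddings_Node2)

section \<open>The Catalan series\<close>

lemma catalan_0 [simp]: "catalan 0 = 1"
  by (simp add: catalan_def)

lemma catalan_Suc: "real (k + 2) * catalan (Suc k) = 2 * real (2 * k + 1) * catalan k"
proof -
  let ?X = "2 * Suc k choose Suc k" and ?Y = "Suc (2 * k) choose k" and ?Z = "2 * k choose k"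
  have "?X * Suc k = Suc (Suc (2 * k)) * ?Y"
    using Suc_times_binomial_eq[of "Suc (2 * k)" k] by simp
  also have "\<dots> = (2 * ?Y) * Suc k"
    by simp
  finally have X: "?X = 2 * ?Y"
    by (rule mult_right_cancel[THEN iffD1, rotated]) simp
  have "Suc (2 * k) choose Suc k = ?Y"
    using binomial_symmetric[of "Suc k" "Suc (2 * k)"] by simp
  then have Z: "Suc (2 * k) * ?Z = ?Y * Suc k"
    using Suc_times_binomial_eq[of "2 * k" k] by simp
  have "real (k + 2) * catalan (Suc k) = real ?X"
    by (simp add: catalan_def)
  also have "\<dots> = 2 * real (2 * k + 1) * (real ?Z / real (Suc k))"
    using arg_cong[OF Z, of real] X by (simp add: field_simps)
  finally show ?thesis
    by (simp add: catalan_def)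
qed

lemma Bfps_nth: "Bfps $ m = (if odd m then catalan ((m - 1) div 2) else 0)"
  by (simp add: Bfps_def)

lemma Bfps_coeff_rec:
  "real (m + 1) * Bfps $ m =
     (if m = 1 then 2 else 0) + (if 3 \<le> m then 4 * real (m - 2) * Bfps $ (m - 2) else 0)"
proof (cases "odd m")
  case True
  then obtain k where m: "m = 2 * k + 1"
    by (metis oddE)
  show ?thesis
  proof (cases k)
    case (Suc k')
    have "real (m + 1) * Bfps $ m = 2 * (real (k' + 2) * catalan (Suc k'))"
      using m Suc by (simp add: Bfps_nth algebra_simps)
    also have "\<dots> = 2 * (2 * real (2 * k' + 1) * catalan k')"
      by (simp only: catalan_Suc)
    also have "\<dots> = 4 * real (m - 2) * Bfps $ (m - 2)"
      using m Suc by (simp add: Bfps_nth)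
    finally show ?thesis
      using m Suc by simp
  qed (simp add: m Bfps_nth catalan_def)
qed (auto simp: Bfps_nth)

lemma eq_Bfps_if_coeff_rec:
  assumes "\<And>m. real (m + 1) * b $ m =
     (if m = 1 then 2 else 0) + (if 3 \<le> m then 4 * real (m - 2) * b $ (m - 2) else 0)"
  shows "b = Bfps"
proof (rule fps_ext)
  fix m
  show "b $ m = Bfps $ m"
  proof (induction m rule: less_induct)
    case (less m)
    then have "real (m + 1) * b $ m = real (m + 1) * Bfps $ m"
      using assms[of m] Bfps_coeff_rec[of m] by simp
    then show ?case
      by simp
  qed
qed

lemma quadratic_imp_coeff_rec:
  assumes b: "b = fps_X + fps_X * b ^ 2"
  shows "real (m + 1) * b $ m =
     (if m = 1 then 2 else 0) + (if 3 \<le> m then 4 * real (m - 2) * b $ (m - 2) else 0)"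
proof -
  let ?d = "fps_deriv b" and ?u = "1 - 2 * fps_X * b"
  have "?d = 1 + b ^ 2 + 2 * fps_X * b * ?d"
    by (subst b) (simp add: power2_eq_square algebra_simps)
  then have d: "?d * ?u = 1 + b ^ 2"
    by (simp add: algebra_simps)
  have "(fps_X - 4 * fps_X ^ 3) * (1 + b ^ 2) =
      (2 * fps_X - b) * ?u + (1 + 4 * fps_X ^ 2) * (b - (fps_X + fps_X * b ^ 2))"
    by (simp add: algebra_simps power2_eq_square power3_eq_cube)
  also have "b - (fps_X + fps_X * b ^ 2) = 0"
    using b by (metis diff_self)
  finally have "(fps_X - 4 * fps_X ^ 3) * (1 + b ^ 2) = (2 * fps_X - b) * ?u"
    by simp
  then have "((fps_X - 4 * fps_X ^ 3) * ?d) * ?u = (2 * fps_X - b) * ?u"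
    using d by (simp add: mult.assoc)
  moreover have "?u $ 0 \<noteq> 0"
    by simp
  then have "?u \<noteq> 0"
    by (metis fps_zero_nth)
  ultimately have ode: "(fps_X - 4 * fps_X ^ 3) * ?d = 2 * fps_X - b"
    by simp
  have "(fps_X - 4 * fps_X ^ 3) * ?d = fps_X * ?d - fps_const 4 * (fps_X ^ 3 * ?d)"
    by (simp add: algebra_simps numeral_fps_const)
  moreover have "Suc (m - 3) = m - 2" if "\<not> m < 3"
    using that by simp
  ultimately have lhs: "((fps_X - 4 * fps_X ^ 3) * ?d) $ m =
      (if m = 0 then 0 else real m * b $ m) - (if m < 3 then 0 else 4 * real (m - 2) * b $ (m - 2))"
    by (auto simp: fps_X_power_mult_nth of_nat_diff)
  moreover have "(2 * fps_X - b) $ m = (if m = 1 then 2 else 0) - b $ m"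
    by (simp add: numeral_fps_const)
  ultimately show ?thesis
    using arg_cong[OF ode, of "\<lambda>f. f $ m"] by (simp add: algebra_simps split: if_splits)
qed

lemma eq_Bfps_if_quadratic: "b = fps_X + fps_X * b ^ 2 \<Longrightarrow> b = Bfps"
  by (rule eq_Bfps_if_coeff_rec) (rule quadratic_imp_coeff_rec)

lemma forest_gf_Nil_quadratic: "forest_gf [] = fps_X + fps_X * forest_gf [] ^ 2"
  using nonroot_gf_rec[of "[]"] forest_gf_eq_nonroot_gf[of "[]"] by (simp add: power2_eq_square)

lemma forest_gf_Nil: "forest_gf [] = Bfps"
  by (rule eq_Bfps_if_quadratic[OF forest_gf_Nil_quadratic])

lemma Bfps_eq: "Bfps = fps_X + fps_X * Bfps ^ 2"
  using forest_gf_Nil_quadratic by (simp add: forest_gf_Nil)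

lemma catalan_Suc_conv: "catalan (Suc n) = (\<Sum>i\<le>n. catalan i * catalan (n - i))"
proof -
  let ?f = "\<lambda>a. Bfps $ a * Bfps $ (2 * n + 2 - a)"
  have "catalan (Suc n) = (fps_X + fps_X * Bfps ^ 2) $ (2 * n + 3)"
    by (subst Bfps_eq[symmetric]) (simp add: Bfps_nth)
  also have "\<dots> = (Bfps * Bfps) $ (2 * n + 2)"
    by (simp add: power2_eq_square)
  also have "\<dots> = (\<Sum>a=0..2 * n + 2. ?f a)"
    by (simp add: fps_mult_nth)
  also have "\<dots> = (\<Sum>a\<in>(\<lambda>i. 2 * i + 1) ` {..n}. ?f a)"
    by (rule sum.mono_neutral_right) (auto simp: Bfps_nth elim!: oddE)
  also have "\<dots> = (\<Sum>i\<le>n. ?f (2 * i + 1))"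
    by (rule sum.reindex_cong[where l = "\<lambda>i. 2 * i + 1"]) (auto simp: inj_on_def)
  also have "\<dots> = (\<Sum>i\<le>n. catalan i * catalan (n - i))"
  proof (rule sum.cong)
    fix i assume "i \<in> {..n}"
    then have "2 * n + 2 - (2 * i + 1) = 2 * (n - i) + 1"
      by auto
    then show "?f (2 * i + 1) = catalan i * catalan (n - i)"
      by (simp add: Bfps_nth)
  qed simp
  finally show ?thesis .
qed

section \<open>Product formula\<close>

definition Dfps :: "real fps" where
  "Dfps = inverse (1 - 2 * fps_X * Bfps)"

lemma Dfps_mult: "Dfps * (1 - 2 * fps_X * Bfps) = 1"
  unfolding Dfps_def by (rule inverse_mult_eq_1) simp

lemma eq_Dfps_mult:
  assumes "a = b + 2 * fps_X * Bfps * a"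
  shows "a = Dfps * b"
proof -
  have "a - 2 * fps_X * Bfps * a = b"
    using assms by (metis add_diff_cancel_right')
  then have "a * (1 - 2 * fps_X * Bfps) = b"
    by (simp add: algebra_simps)
  then have "Dfps * b = a * (Dfps * (1 - 2 * fps_X * Bfps))"
    by (simp add: mult.left_commute)
  then show ?thesis
    by (simp add: Dfps_mult)
qed

lemma nonroot_gf_single: "nonroot_gf [S] = 2 * fps_X * Bfps * forest_gf [S]"
proof -
  have "nonroot_gf [S] = fps_X * (forest_gf [] * forest_gf [S] + forest_gf [S] * forest_gf [])"
    by (simp add: nonroot_gf_rec)
  then show ?thesis
    by (simp add: forest_gf_Nil algebra_simps)
qed

lemma forest_gf_single_Node: "forest_gf [Node ts] = Dfps * nonroot_gf ts"
  by (rule eq_Dfps_mult) (metis forest_gf_single_Node_split nonroot_gf_single)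

lemma fps_const_sum: "fps_const (\<Sum>i\<in>A. f i) = (\<Sum>i\<in>A. fps_const (f i))"
  by (induction A rule: infinite_finite_induct) (simp_all flip: fps_const_add)

lemma sum_atMost_Suc_Suc_split:
  "(\<Sum>j\<le>Suc (Suc n). f j) = f 0 + (\<Sum>j\<le>n. f (Suc j)) + (f (Suc (Suc n)) :: 'a::comm_monoid_add)"
  unfolding sum.atMost_Suc_shift[of _ "Suc n"] sum.atMost_Suc[of "\<lambda>j. f (Suc j)" n] by (simp add: ac_simps)

lemma forest_gf_catalan_factor:
  "length ts = Suc n \<Longrightarrow>
     forest_gf ts = fps_const (catalan n) * (fps_X * Dfps) ^ n * (\<Prod>S\<leftarrow>ts. forest_gf [S])"
proof (induction n arbitrary: ts rule: less_induct)
  case (less n)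
  let ?P = "\<lambda>xs. \<Prod>S\<leftarrow>xs. forest_gf [S]"
  show ?case
  proof (cases n)
    case 0
    then show ?thesis
      using less.prems by (auto simp: length_Suc_conv)
  next
    case (Suc n')
    let ?h = "\<lambda>j. forest_gf (take j ts) * forest_gf (drop j ts)"
    have inner: "?h (Suc j) = fps_const (catalan j * catalan (n' - j)) * (fps_X * Dfps) ^ n' * ?P ts"
      if "j \<le> n'" for j
    proof -
      have "forest_gf (take (Suc j) ts) = fps_const (catalan j) * (fps_X * Dfps) ^ j * ?P (take (Suc j) ts)"
        and "forest_gf (drop (Suc j) ts) =
          fps_const (catalan (n' - j)) * (fps_X * Dfps) ^ (n' - j) * ?P (drop (Suc j) ts)"
        using less.IH[of j "take (Suc j) ts"] less.IH[of "n' - j" "drop (Suc j) ts"] less.prems Suc that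
        by simp_all
      moreover have "?P (take (Suc j) ts) * ?P (drop (Suc j) ts) = ?P ts"
        by (simp flip: prod_list.append map_append)
      moreover have "(fps_X * Dfps) ^ j * (fps_X * Dfps) ^ (n' - j) = (fps_X * Dfps) ^ n'"
        using that by (simp flip: power_add)
      ultimately show ?thesis
        by (simp add: mult_ac)
    qed
    have "length ts \<noteq> 1" "ts \<noteq> []"
      using less.prems Suc by auto
    have "forest_gf ts = nonroot_gf ts"
      by (rule forest_gf_eq_nonroot_gf) fact
    also have "\<dots> = fps_X * (\<Sum>j\<le>Suc (Suc n'). ?h j)"
      using less.prems Suc \<open>ts \<noteq> []\<close> by (simp add: nonroot_gf_rec)
    also have "\<dots> = fps_X * (?h 0 + (\<Sum>j\<le>n'. ?h (Suc j)) + ?h (Suc (Suc n')))"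
      by (simp only: sum_atMost_Suc_Suc_split)
    also have "(\<Sum>j\<le>n'. ?h (Suc j)) = fps_const (catalan n) * (fps_X * Dfps) ^ n' * ?P ts"
      using Suc by (simp add: inner catalan_Suc_conv fps_const_sum sum_distrib_right)
    also have "?h 0 = Bfps * forest_gf ts"
      by (simp add: forest_gf_Nil)
    also have "?h (Suc (Suc n')) = forest_gf ts * Bfps"
      using less.prems Suc by (simp add: forest_gf_Nil)
    finally have "forest_gf ts =
        fps_X * (fps_const (catalan n) * (fps_X * Dfps) ^ n' * ?P ts) + 2 * fps_X * Bfps * forest_gf ts"
      by (simp add: algebra_simps)
    then have "forest_gf ts = Dfps * (fps_X * (fps_const (catalan n) * (fps_X * Dfps) ^ n' * ?P ts))"
      by (rule eq_Dfps_mult)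
    then show ?thesis
      using Suc by (simp add: algebra_simps)
  qed
qed

text \<open>Normalised as \<open>fps_X * Dfps * forest_gf [S]\<close>, the series of a tree becomes
  multiplicative over its vertices, each contributing a weight determined by its out-degree.\<close>

definition vertex_weight :: "nat \<Rightarrow> real fps" where
  "vertex_weight k = (if k = 0 then fps_X * Dfps * Bfps else if k = 1 then 2 * fps_X * Bfps
     else fps_const (catalan (k - 1)))"

lemma prod_list_conv_prod_nth: "(\<Prod>x\<leftarrow>xs. f x) = (\<Prod>i<length xs. f (xs ! i) :: 'a::comm_monoid_mult)"
  by (induction xs) (simp_all add: prod.lessThan_Suc_shift del: prod.lessThan_Suc)

lemma forest_gf_Node_weight:
  "fps_X * Dfps * forest_gf [Node ts] =
     Dfps * vertex_weight (length ts) * (\<Prod>i<length ts. fps_X * Dfps * forest_gf [ts ! i])"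
proof (cases "length ts \<le> 1")
  case True
  then consider "ts = []" | S where "ts = [S]"
    by (cases ts) auto
  then show ?thesis
  proof cases
    case 1
    then show ?thesis
      by (simp add: forest_gf_single_Node forest_gf_eq_nonroot_gf[symmetric] forest_gf_Nil
          vertex_weight_def mult_ac)
  next
    case 2
    then show ?thesis
      by (simp add: forest_gf_single_Node nonroot_gf_single vertex_weight_def mult_ac)
  qed
next
  case False
  define n where "n = length ts - 1"
  then have n: "length ts = Suc n" "n \<noteq> 0"
    using False by simp_all
  have "nonroot_gf ts = forest_gf ts"
    using n by (simp add: forest_gf_eq_nonroot_gf)
  also have "\<dots> = fps_const (catalan n) * (fps_X * Dfps) ^ n * (\<Prod>i<length ts. forest_gf [ts ! i])"
    using forest_gf_catalan_factor[OF n(1)] by (simp add: prod_list_conv_prod_nth)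
  finally show ?thesis
    using n by (simp add: forest_gf_single_Node vertex_weight_def prod.distrib power_mult_distrib mult_ac)
qed

lemma prod_verts_Node:
  "(\<Prod>p\<in>verts (Node ts). g (outdeg (Node ts) p)) =
     g (length ts) * (\<Prod>i<length ts. \<Prod>p\<in>verts (ts ! i). g (outdeg (ts ! i) p))"
proof -
  have "(\<Prod>p\<in>(\<Union>i<length ts. (#) i ` verts (ts ! i)). g (outdeg (Node ts) p)) =
      (\<Prod>i<length ts. \<Prod>p\<in>(#) i ` verts (ts ! i). g (outdeg (Node ts) p))"
    by (rule prod.UNION_disjoint) auto
  also have "\<dots> = (\<Prod>i<length ts. \<Prod>p\<in>verts (ts ! i). g (outdeg (ts ! i) p))"
    by (rule prod.cong) (simp_all add: prod.reindex)
  finally show ?thesis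
    unfolding verts_Node by (subst prod.insert) auto
qed

lemma forest_gf_single_weight:
  "fps_X * Dfps * forest_gf [S] = Dfps ^ nverts S * (\<Prod>p\<in>verts S. vertex_weight (outdeg S p))"
proof (induction S)
  case (Node ts)
  have "fps_X * Dfps * forest_gf [Node ts] =
      Dfps * vertex_weight (length ts) *
        (\<Prod>i<length ts. Dfps ^ nverts (ts ! i) * (\<Prod>p\<in>verts (ts ! i). vertex_weight (outdeg (ts ! i) p)))"
    unfolding forest_gf_Node_weight using Node.IH by (auto intro!: prod.cong)
  then show ?case
    by (simp add: prod_verts_Node nverts_Node prod.distrib power_sum mult_ac)
qed

lemma nverts_pos: "0 < nverts t"
  unfolding nverts_def by (metis Nil_in_verts card_gt_0_iff empty_iff finite_verts)

lemma outdeg_less_nverts: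
  assumes "p \<in> verts t"
  shows "outdeg t p < nverts t"
proof -
  have "insert p ((\<lambda>j. p @ [j]) ` {..<outdeg t p}) \<subseteq> verts t"
    using assms by (auto simp: snoc_in_verts_iff)
  then have "card (insert p ((\<lambda>j. p @ [j]) ` {..<outdeg t p})) \<le> nverts t"
    unfolding nverts_def by (rule card_mono[OF finite_verts])
  moreover have "card (insert p ((\<lambda>j. p @ [j]) ` {..<outdeg t p})) = Suc (outdeg t p)"
    by (subst card_insert_disjoint) (auto simp: card_image inj_on_def)
  ultimately show ?thesis
    by simp
qed

lemma degdist_0_pos: "0 < degdist t 0"
proof -
  let ?M = "Max (length ` verts t)"
  have "?M \<in> length ` verts t"
  proof (rule Max_in)
    show "length ` verts t \<noteq> {}"
      using Nil_in_verts by blast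
  qed simp
  then obtain p where p: "p \<in> verts t" "length p = ?M"
    by auto
  have "outdeg t p = 0"
  proof (rule ccontr)
    assume "outdeg t p \<noteq> 0"
    then have "p @ [0] \<in> verts t"
      using p(1) by (simp add: snoc_in_verts_iff)
    then have "length (p @ [0]) \<in> length ` verts t"
      by (rule imageI)
    then show False
      using Max_ge[OF finite_imageI[OF finite_verts]] p(2) by fastforce
  qed
  then have "{q \<in> verts t. outdeg t q = 0} \<noteq> {}"
    using p(1) by blast
  then show ?thesis
    unfolding degdist_def by (simp add: card_gt_0_iff)
qed

lemma prod_outdeg_eq_prod_degdist:
  fixes g :: "nat \<Rightarrow> 'a::comm_monoid_mult"
  assumes "finite I" "outdeg t ` verts t \<subseteq> I"
  shows "(\<Prod>p\<in>verts t. g (outdeg t p)) = (\<Prod>i\<in>I. g i ^ degdist t i)"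
proof -
  have "(\<Prod>p\<in>verts t. g (outdeg t p)) =
      (\<Prod>i\<in>outdeg t ` verts t. \<Prod>p\<in>{p \<in> verts t. outdeg t p = i}. g (outdeg t p))"
    by (rule prod.image_gen) simp
  also have "\<dots> = (\<Prod>i\<in>outdeg t ` verts t. g i ^ degdist t i)"
    by (rule prod.cong) (simp_all add: degdist_def)
  also have "\<dots> = (\<Prod>i\<in>I. g i ^ degdist t i)"
  proof (rule prod.mono_neutral_left)
    show "\<forall>i\<in>I - outdeg t ` verts t. g i ^ degdist t i = 1"
    proof
      fix i assume "i \<in> I - outdeg t ` verts t"
      then have "{p \<in> verts t. outdeg t p = i} = {}"
        by blast
      then show "g i ^ degdist t i = 1"
        unfolding degdist_def by (simp only: card.empty power_0)
    qed
  qed (use assms in auto)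
  finally show ?thesis .
qed

lemma fps_const_prod: "fps_const (\<Prod>i\<in>A. f i) = (\<Prod>i\<in>A. fps_const (f i))"
  by (induction A rule: infinite_finite_induct) (simp_all flip: fps_const_mult)

lemma prod_vertex_weight:
  "(\<Prod>p\<in>verts t. vertex_weight (outdeg t p)) =
     (fps_X * Dfps * Bfps) ^ degdist t 0 * (2 * fps_X * Bfps) ^ degdist t 1 *
     fps_const (\<Prod>i\<in>{3..nverts t - 1}. catalan (i - 1) ^ degdist t i)"
proof -
  let ?c = "\<lambda>i. catalan (i - 1) ^ degdist t i"
  have "outdeg t ` verts t \<subseteq> insert 0 (insert 1 {2..<nverts t})"
    using outdeg_less_nverts by fastforce
  then have "(\<Prod>p\<in>verts t. vertex_weight (outdeg t p)) =
      (fps_X * Dfps * Bfps) ^ degdist t 0 * ((2 * fps_X * Bfps) ^ degdist t 1 *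
        (\<Prod>i\<in>{2..<nverts t}. fps_const (?c i)))"
    by (subst prod_outdeg_eq_prod_degdist) (auto simp: vertex_weight_def intro!: prod.cong)
  also have "(\<Prod>i\<in>{2..<nverts t}. ?c i) = (\<Prod>i\<in>{3..nverts t - 1}. ?c i)"
  proof (rule prod.mono_neutral_right)
    show "{3..nverts t - 1} \<subseteq> {2..<nverts t}"
      using nverts_pos[of t] by auto
    show "\<forall>i\<in>{2..<nverts t} - {3..nverts t - 1}. ?c i = 1"
    proof
      fix i assume "i \<in> {2..<nverts t} - {3..nverts t - 1}"
      then have "i = 2"
        by auto
      then show "?c i = 1"
        by (simp add: catalan_def)
    qed
  qed simp
  ultimately show ?thesis
    by (simp add: fps_const_prod[symmetric] mult.assoc)
qed

theorem theorem1:
  fixes S :: ptree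
  shows "A_fps S =
    (inverse (1 - 2 * fps_X * Bfps)) ^ (nverts S + degdist S 0 - 1)
    * fps_X ^ (degdist S 0 + degdist S 1 - 1)
    * Bfps ^ (degdist S 0 + degdist S 1)
    * fps_const (2 ^ degdist S 1 * (\<Prod>i\<in>{3..nverts S - 1}. catalan (i - 1) ^ degdist S i))"
proof -
  let ?m = "nverts S" and ?l = "degdist S 0" and ?u = "degdist S 1"
  let ?K = "\<Prod>i\<in>{3..nverts S - 1}. catalan (i - 1) ^ degdist S i"
  let ?rhs = "Dfps ^ (?m + ?l - 1) * fps_X ^ (?l + ?u - 1) * Bfps ^ (?l + ?u) * fps_const (2 ^ ?u * ?K)"
  have "fps_X * Dfps * A_fps S =
      Dfps ^ ?m * ((fps_X * Dfps * Bfps) ^ ?l * (2 * fps_X * Bfps) ^ ?u * fps_const ?K)"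
    by (simp add: A_fps_eq_forest_gf forest_gf_single_weight prod_vertex_weight)
  also have "\<dots> = fps_X * Dfps * ?rhs"
  proof -
    obtain l' where l': "?l = Suc l'"
      using degdist_0_pos[of S] gr0_conv_Suc by blast
    have "?m + ?l - 1 = ?m + l'" "?l + ?u - 1 = l' + ?u"
      using l' by simp_all
    moreover have "fps_const (2 ^ ?u * ?K) = 2 ^ ?u * fps_const ?K"
      by (simp add: numeral_fps_const)
    ultimately show ?thesis
      using l' by (simp add: power_mult_distrib power_add mult_ac)
  qed
  finally have "fps_X * Dfps * A_fps S = fps_X * Dfps * ?rhs" .
  moreover have "fps_X * Dfps \<noteq> 0"
    using Dfps_mult by auto
  ultimately show ?thesis
    unfolding Dfps_def by simp
qed

end
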